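(* Let $R$ be a commutative ring with $1\neq 0$, $M$ an $R$-module, and $S\subseteq T$ multiplicatively closed subsets of $R$. Then every $S$-quasi-copure submodule of $M$ is a $T$-quasi-copure submodule of $M$, i.e., $C^{S}_{q}(M)\subseteq C^{T}_{q}(M)$.
   Context: All rings are commutative with $1\neq 0$ and all modules are unital. A multiplicatively closed subset (m.c.s.) $S$ of $R$ is a subset with $0\notin S$, $1\in S$, and $ss'\in S$ for all $s,s'\in S$. For an ideal $I$ and submodule $L$, $(L:_M I)=\{m\in M: Im\subseteq L\}$, $(0:_M I)=\{m\in M: Im=0\}$, $(L:_R M)=\{r\in R: rM\subseteq L\}$. A submodule $P$ of $M$ with $(P:_R M)\cap S=\emptyset$ is $S$-prime if there exists $s\in S$ such that whenever $am\in P$ ($a\in R$, $m\in M$), then $sa\in(P:_R M)$ or $sm\in P$. A submodule $L$ of $M$ is $S$-copure if there exists $s\in S$ such that $s(L:_M I)\subseteq L+(0:_M I)$ for every ideal $I$ of $R$. A submodule $N$ of $M$ is $S$-quasi-copure if every $S$-prime submodule of $M$ containing $N$ is $S$-copure; $C^{S}_{q}(M)$ denotes the set of $S$-quasi-copure submodules of $M$. *)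

theory Defs
  imports "HOL-Algebra.Algebra"
begin

definition mcs :: "('a, 'c) ring_scheme \<Rightarrow> 'a set \<Rightarrow> bool" where
  "mcs R S \<longleftrightarrow> S \<subseteq> carrier R \<and> \<zero>\<^bsub>R\<^esub> \<notin> S \<and> \<one>\<^bsub>R\<^esub> \<in> S \<and>
     (\<forall>s\<in>S. \<forall>s'\<in>S. s \<otimes>\<^bsub>R\<^esub> s' \<in> S)"

definition colonRM :: "('a, 'c) ring_scheme \<Rightarrow> ('a, 'b, 'd) module_scheme \<Rightarrow> 'b set \<Rightarrow> 'a set" where
  "colonRM R M L = {r \<in> carrier R. \<forall>m\<in>carrier M. r \<odot>\<^bsub>M\<^esub> m \<in> L}"

definition colonMI :: "('a, 'b, 'd) module_scheme \<Rightarrow> 'b set \<Rightarrow> 'a set \<Rightarrow> 'b set" where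
  "colonMI M L I = {m \<in> carrier M. \<forall>a\<in>I. a \<odot>\<^bsub>M\<^esub> m \<in> L}"

definition annM :: "('a, 'b, 'd) module_scheme \<Rightarrow> 'a set \<Rightarrow> 'b set" where
  "annM M I = colonMI M {\<zero>\<^bsub>M\<^esub>} I"

definition S_prime :: "('a, 'c) ring_scheme \<Rightarrow> ('a, 'b, 'd) module_scheme \<Rightarrow> 'a set \<Rightarrow> 'b set \<Rightarrow> bool" where
  "S_prime R M S P \<longleftrightarrow> submodule P R M \<and> colonRM R M P \<inter> S = {} \<and>
     (\<exists>s\<in>S. \<forall>a\<in>carrier R. \<forall>m\<in>carrier M. a \<odot>\<^bsub>M\<^esub> m \<in> P \<longrightarrow>
        s \<otimes>\<^bsub>R\<^esub> a \<in> colonRM R M P \<or> s \<odot>\<^bsub>M\<^esub> m \<in> P)"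

definition S_copure :: "('a, 'c) ring_scheme \<Rightarrow> ('a, 'b, 'd) module_scheme \<Rightarrow> 'a set \<Rightarrow> 'b set \<Rightarrow> bool" where
  "S_copure R M S L \<longleftrightarrow> submodule L R M \<and>
     (\<exists>s\<in>S. \<forall>I. ideal I R \<longrightarrow>
        (\<lambda>m. s \<odot>\<^bsub>M\<^esub> m) ` colonMI M L I \<subseteq> L <+>\<^bsub>M\<^esub> annM M I)"

definition S_quasi_copure :: "('a, 'c) ring_scheme \<Rightarrow> ('a, 'b, 'd) module_scheme \<Rightarrow> 'a set \<Rightarrow> 'b set \<Rightarrow> bool" where
  "S_quasi_copure R M S N \<longleftrightarrow> submodule N R M \<and>
     (\<forall>P. S_prime R M S P \<and> N \<subseteq> P \<longrightarrow> S_copure R M S P)"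

definition CqS :: "('a, 'c) ring_scheme \<Rightarrow> ('a, 'b, 'd) module_scheme \<Rightarrow> 'a set \<Rightarrow> 'b set set" where
  "CqS R M S = {N. S_quasi_copure R M S N}"

end

theory Submission
  imports Defs
begin

text \<open>Let \<open>P\<close> be a \<open>T\<close>-prime submodule containing \<open>N\<close>, with witness \<open>w \<in> T\<close>. The submodule
  \<open>Q = (P :\<^sub>M w)\<close> contains \<open>P\<close> and is \<open>S\<close>-prime with witness \<open>1\<close>, so it is \<open>S\<close>-copure
  with some witness \<open>s\<close>; multiplying its decompositions by \<open>w\<close> shows that \<open>P\<close> is
  \<open>T\<close>-copure with witness \<open>w s \<in> T\<close>.\<close>

lemma colonMI_mono: "P \<subseteq> Q \<Longrightarrow> colonMI M P I \<subseteq> colonMI M Q I"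
  unfolding colonMI_def by auto

context module
begin

lemma colonMI_singleton: "colonMI M P {w} = {m \<in> carrier M. w \<odot>\<^bsub>M\<^esub> m \<in> P}"
  unfolding colonMI_def by auto

lemma submodule_zero_closed: "submodule P R M \<Longrightarrow> \<zero>\<^bsub>M\<^esub> \<in> P"
  using subgroup.one_closed[OF submodule.axioms(1)] by fastforce

lemma submodule_colonMI:
  assumes P: "submodule P R M" and I: "I \<subseteq> carrier R"
  shows "submodule (colonMI M P I) R M"
proof (rule submoduleI)
  show "colonMI M P I \<subseteq> carrier M" unfolding colonMI_def by auto
  show "\<zero>\<^bsub>M\<^esub> \<in> colonMI M P I"
    unfolding colonMI_def using I submodule_zero_closed[OF P] by auto
next
  fix x assume "x \<in> colonMI M P I"
  then show "\<ominus>\<^bsub>M\<^esub> x \<in> colonMI M P I"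
    unfolding colonMI_def using I submoduleE(3)[OF P] by (auto simp: smult_r_minus subsetD)
next
  fix x y assume "x \<in> colonMI M P I" "y \<in> colonMI M P I"
  then show "x \<oplus>\<^bsub>M\<^esub> y \<in> colonMI M P I"
    unfolding colonMI_def using I submoduleE(5)[OF P] by (auto simp: smult_r_distr subsetD)
next
  fix a x assume a: "a \<in> carrier R" and x: "x \<in> colonMI M P I"
  have "b \<odot>\<^bsub>M\<^esub> (a \<odot>\<^bsub>M\<^esub> x) \<in> P" if b: "b \<in> I" for b
  proof -
    have bc: "b \<in> carrier R" using b I by auto
    have "b \<odot>\<^bsub>M\<^esub> (a \<odot>\<^bsub>M\<^esub> x) = a \<odot>\<^bsub>M\<^esub> (b \<odot>\<^bsub>M\<^esub> x)"
      using a bc x unfolding colonMI_def by (auto simp: smult_assoc1[symmetric] m_comm)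
    then show ?thesis using a b x submoduleE(4)[OF P] unfolding colonMI_def by auto
  qed
  then show "a \<odot>\<^bsub>M\<^esub> x \<in> colonMI M P I" using a x unfolding colonMI_def by auto
qed

lemma subset_colonMI: "submodule P R M \<Longrightarrow> I \<subseteq> carrier R \<Longrightarrow> P \<subseteq> colonMI M P I"
  unfolding colonMI_def using submoduleE(1,4) by blast

lemma smult_annM:
  assumes w: "w \<in> carrier R" and I: "I \<subseteq> carrier R" and z: "z \<in> annM M I"
  shows "w \<odot>\<^bsub>M\<^esub> z \<in> annM M I"
proof -
  have zc: "z \<in> carrier M" using z unfolding annM_def colonMI_def by auto
  have "a \<odot>\<^bsub>M\<^esub> (w \<odot>\<^bsub>M\<^esub> z) = \<zero>\<^bsub>M\<^esub>" if a: "a \<in> I" for a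
  proof -
    have "a \<odot>\<^bsub>M\<^esub> (w \<odot>\<^bsub>M\<^esub> z) = w \<odot>\<^bsub>M\<^esub> (a \<odot>\<^bsub>M\<^esub> z)"
      using a I w zc by (auto simp: smult_assoc1[symmetric] m_comm)
    also have "\<dots> = \<zero>\<^bsub>M\<^esub>" using a z w unfolding annM_def colonMI_def by auto
    finally show ?thesis .
  qed
  then show ?thesis using w zc unfolding annM_def colonMI_def by auto
qed

lemma S_prime_colonMI_singleton:
  assumes S: "mcs R S" and T: "mcs R T" and ST: "S \<subseteq> T"
    and P: "submodule P R M" and disj: "colonRM R M P \<inter> T = {}" and wT: "w \<in> T"
    and prime: "\<And>a m. a \<in> carrier R \<Longrightarrow> m \<in> carrier M \<Longrightarrow> a \<odot>\<^bsub>M\<^esub> m \<in> P \<Longrightarrow>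
        w \<otimes> a \<in> colonRM R M P \<or> w \<odot>\<^bsub>M\<^esub> m \<in> P"
  shows "S_prime R M S (colonMI M P {w})"
proof -
  let ?Q = "colonMI M P {w}"
  have Tc: "T \<subseteq> carrier R" and Tm: "\<And>x y. x \<in> T \<Longrightarrow> y \<in> T \<Longrightarrow> x \<otimes> y \<in> T"
    using T unfolding mcs_def by auto
  have S1: "\<one> \<in> S" using S unfolding mcs_def by auto
  have w: "w \<in> carrier R" using wT Tc by auto
  have colon: "a \<in> colonRM R M ?Q" if "a \<in> carrier R" "w \<otimes> a \<in> colonRM R M P" for a
    using that w unfolding colonRM_def colonMI_singleton by (auto simp: smult_assoc1)
  have "colonRM R M ?Q \<inter> S = {}"
  proof (rule ccontr)
    assume "colonRM R M ?Q \<inter> S \<noteq> {}"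
    then obtain s where s: "s \<in> S" "s \<in> colonRM R M ?Q" by auto
    have "w \<otimes> s \<in> colonRM R M P"
      using s w unfolding colonRM_def colonMI_singleton by (auto simp: smult_assoc1)
    moreover have "w \<otimes> s \<in> T" using Tm wT s ST by auto
    ultimately show False using disj by auto
  qed
  moreover have "\<one> \<otimes> a \<in> colonRM R M ?Q \<or> \<one> \<odot>\<^bsub>M\<^esub> m \<in> ?Q"
    if a: "a \<in> carrier R" and m: "m \<in> carrier M" and am: "a \<odot>\<^bsub>M\<^esub> m \<in> ?Q" for a m
  proof -
    have "a \<odot>\<^bsub>M\<^esub> (w \<odot>\<^bsub>M\<^esub> m) \<in> P"
      using am a m w unfolding colonMI_singleton by (metis (no_types, lifting) mem_Collect_eq smult_assoc1 m_comm)
    then have "w \<otimes> a \<in> colonRM R M P \<or> w \<odot>\<^bsub>M\<^esub> (w \<odot>\<^bsub>M\<^esub> m) \<in> P"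
      using prime a m w by auto
    moreover
    \<comment> \<open>Applying primeness once more to \<open>(w w) m \<in> P\<close>: the alternative \<open>w w w \<in> (P :\<^sub>R M)\<close>
       is excluded because \<open>w w w \<in> T\<close>.\<close>
    have "w \<odot>\<^bsub>M\<^esub> m \<in> P" if "w \<odot>\<^bsub>M\<^esub> (w \<odot>\<^bsub>M\<^esub> m) \<in> P"
    proof -
      have "(w \<otimes> w) \<odot>\<^bsub>M\<^esub> m \<in> P" using that w m by (simp add: smult_assoc1)
      then have "w \<otimes> (w \<otimes> w) \<in> colonRM R M P \<or> w \<odot>\<^bsub>M\<^esub> m \<in> P"
        using prime w m by auto
      moreover have "w \<otimes> (w \<otimes> w) \<in> T" using Tm wT by auto
      ultimately show ?thesis using disj by auto
    qed
    ultimately show ?thesis using colon a m unfolding colonMI_singleton by auto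
  qed
  ultimately show ?thesis
    unfolding S_prime_def using submodule_colonMI[OF P] w S1 by blast
qed

lemma S_copure_of_S_copure_colonMI_singleton:
  assumes T: "mcs R T" and ST: "S \<subseteq> T" and wT: "w \<in> T"
    and P: "submodule P R M" and copure: "S_copure R M S (colonMI M P {w})"
  shows "S_copure R M T P"
proof -
  have Tc: "T \<subseteq> carrier R" and Tm: "\<And>x y. x \<in> T \<Longrightarrow> y \<in> T \<Longrightarrow> x \<otimes> y \<in> T"
    using T unfolding mcs_def by auto
  have w: "w \<in> carrier R" using wT Tc by auto
  from copure obtain s where sS: "s \<in> S" and decomp: "\<And>I. ideal I R \<Longrightarrow>
      (\<lambda>m. s \<odot>\<^bsub>M\<^esub> m) ` colonMI M (colonMI M P {w}) I \<subseteq> colonMI M P {w} <+>\<^bsub>M\<^esub> annM M I"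
    unfolding S_copure_def by blast
  have s: "s \<in> carrier R" using sS ST Tc by auto
  have "(w \<otimes> s) \<odot>\<^bsub>M\<^esub> m \<in> P <+>\<^bsub>M\<^esub> annM M I"
    if I: "ideal I R" and mI: "m \<in> colonMI M P I" for I m
  proof -
    have Ic: "I \<subseteq> carrier R" using I by (simp add: ideal.axioms(1) additive_subgroup.a_subset)
    have mc: "m \<in> carrier M" using mI unfolding colonMI_def by auto
    have "m \<in> colonMI M (colonMI M P {w}) I"
      using mI colonMI_mono[OF subset_colonMI[OF P]] w by blast
    then have "s \<odot>\<^bsub>M\<^esub> m \<in> colonMI M P {w} <+>\<^bsub>M\<^esub> annM M I" using decomp[OF I] by auto
    then obtain q z where q: "q \<in> colonMI M P {w}" and z: "z \<in> annM M I"
      and sm: "s \<odot>\<^bsub>M\<^esub> m = q \<oplus>\<^bsub>M\<^esub> z"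
      unfolding set_add_def' by auto
    have qc: "q \<in> carrier M" and wq: "w \<odot>\<^bsub>M\<^esub> q \<in> P" using q unfolding colonMI_singleton by auto
    have zc: "z \<in> carrier M" using z unfolding annM_def colonMI_def by auto
    have "(w \<otimes> s) \<odot>\<^bsub>M\<^esub> m = w \<odot>\<^bsub>M\<^esub> q \<oplus>\<^bsub>M\<^esub> w \<odot>\<^bsub>M\<^esub> z"
      using sm w s mc qc zc by (simp add: smult_assoc1 smult_r_distr)
    then show ?thesis
      using wq smult_annM[OF w Ic z] unfolding set_add_def' by auto
  qed
  moreover have "w \<otimes> s \<in> T" using Tm wT sS ST by auto
  ultimately show ?thesis unfolding S_copure_def using P by blast
qed

end

theorem theorem3p5:
  fixes R :: "('a, 'c) ring_scheme" and M :: "('a, 'b, 'd) module_scheme"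
    and S T :: "'a set"
  assumes "module R M"
    and "\<one>\<^bsub>R\<^esub> \<noteq> \<zero>\<^bsub>R\<^esub>"
    and "mcs R S" and "mcs R T" and "S \<subseteq> T"
  shows "CqS R M S \<subseteq> CqS R M T"
proof
  fix N assume "N \<in> CqS R M S"
  then have N: "submodule N R M"
    and copure: "\<And>Q. S_prime R M S Q \<Longrightarrow> N \<subseteq> Q \<Longrightarrow> S_copure R M S Q"
    unfolding CqS_def S_quasi_copure_def by auto
  have "S_copure R M T P" if P: "S_prime R M T P" and NP: "N \<subseteq> P" for P
  proof -
    from P obtain w where "submodule P R M" "colonRM R M P \<inter> T = {}" "w \<in> T"
      and "\<And>a m. a \<in> carrier R \<Longrightarrow> m \<in> carrier M \<Longrightarrow> a \<odot>\<^bsub>M\<^esub> m \<in> P \<Longrightarrow>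
          w \<otimes>\<^bsub>R\<^esub> a \<in> colonRM R M P \<or> w \<odot>\<^bsub>M\<^esub> m \<in> P"
      unfolding S_prime_def by blast
    moreover have "w \<in> carrier R" using \<open>w \<in> T\<close> assms(4) unfolding mcs_def by auto
    ultimately have "S_prime R M S (colonMI M P {w})" and "N \<subseteq> colonMI M P {w}"
      using module.S_prime_colonMI_singleton[OF assms(1,3,4,5)]
        module.subset_colonMI[OF assms(1)] NP by blast+
    then show ?thesis
      using copure module.S_copure_of_S_copure_colonMI_singleton[OF assms(1,4,5)]
        \<open>w \<in> T\<close> \<open>submodule P R M\<close> by blast
  qed
  then show "N \<in> CqS R M T" unfolding CqS_def S_quasi_copure_def using N by auto
qed

end
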